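(* Let $N\geq2$ and $1<\alpha<N$. There exists a continuous increasing function $\tau_2:[0,\infty)\to[0,\infty)$, depending only on $N$ and $\alpha$, with $\tau_2(0)=0$, such that the following holds. For any Borel sets $G,H,K\subseteq\mathbb R^N$ with $|H|=|K|<\infty$ and any invertible transport map $\Phi$ between $H$ and $K$, \[ \big|\mathfrak I(G,H)-\mathfrak I(G,K)\big|\leq\tau_2(|G|)\int_H 1\wedge|y-\Phi(y)|\,dy\,. \]
   Context: For Borel sets $G,H$, $\mathfrak I(G,H)=\int_G\int_H |y-x|^{-(N-\alpha)}\,dy\,dx$; $a\wedge b=\min\{a,b\}$. For Borel sets $H,K$ of equal finite measure, a transport map between $H$ and $K$ is a Borel map $\Phi:\mathbb R^N\to\mathbb R^N$ such that $\int_K\varphi(z)\,dz=\int_H\varphi(\Phi(y))\,dy$ for every continuous $\varphi\geq0$. It is an invertible transport map if there is a Borel map $\Phi^{-1}:\mathbb R^N\to\mathbb R^N$ that is a transport map between $K$ and $H$, with $\Phi(\Phi^{-1}(z))=z$ for a.e. $z\in K$ and $\Phi^{-1}(\Phi(y))=y$ for a.e. $y\in H$. *)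

theory Defs
  imports "HOL-Analysis.Analysis"
begin

definition riesz_I :: "real \<Rightarrow> 'a::euclidean_space set \<Rightarrow> 'a set \<Rightarrow> real" where
  "riesz_I \<alpha> G H = enn2real (\<integral>\<^sup>+ x. indicator G x *
      (\<integral>\<^sup>+ y. indicator H y * ennreal (norm (y - x) powr (-(real DIM('a) - \<alpha>))) \<partial>lborel) \<partial>lborel)"

definition transport_map :: "('a::euclidean_space \<Rightarrow> 'a) \<Rightarrow> 'a set \<Rightarrow> 'a set \<Rightarrow> bool" where
  "transport_map \<Phi> H K \<longleftrightarrow> \<Phi> \<in> borel_measurable borel \<and>
     (\<forall>\<phi> :: 'a \<Rightarrow> real. continuous_on UNIV \<phi> \<longrightarrow> (\<forall>z. \<phi> z \<ge> 0) \<longrightarrow>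
        (\<integral>\<^sup>+ z. indicator K z * ennreal (\<phi> z) \<partial>lborel)
          = (\<integral>\<^sup>+ y. indicator H y * ennreal (\<phi> (\<Phi> y)) \<partial>lborel))"

definition invertible_transport_map :: "('a::euclidean_space \<Rightarrow> 'a) \<Rightarrow> 'a set \<Rightarrow> 'a set \<Rightarrow> bool" where
  "invertible_transport_map \<Phi> H K \<longleftrightarrow> transport_map \<Phi> H K \<and>
     (\<exists>\<Psi>. transport_map \<Psi> K H \<and>
        (AE z in lborel. z \<in> K \<longrightarrow> \<Phi> (\<Psi> z) = z) \<and>
        (AE y in lborel. y \<in> H \<longrightarrow> \<Psi> (\<Phi> y) = y))"

end

(*
  Write k(v) = |v| powr -(N - alpha).  The transport identity, extended from continuous test
  functions to k(. - x) by monotone truncation of the singularity, gives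
    I(G,K) = int_G int_H k(Phi y - x) dy dx,
  hence |I(G,H) - I(G,K)| <= int_H int_G |k(y - x) - k(Phi y - x)| dx dy.
  For fixed y, z the inner integral over G is at most 2 C_beta |G|^(1 - beta/N) and, by the mean
  value theorem, at most 2 (beta + 1) C_(beta+1) |G|^(1 - (beta+1)/N) |y - z|, where beta = N - alpha
  and C_gamma = riesz_const N gamma comes from the bound
    int_G |x - w| powr -gamma dx <= C_gamma |G|^(1 - gamma/N)     (0 < gamma < N),
  obtained by summing over dyadic balls around w.  The sum of the two bounds is riesz_modulus;
  since alpha > 1 both of its exponents are positive.
*)

theory Submission
  imports Defs
begin

lemma ennreal_le_suminf: "f k \<le> (\<Sum>i. f i :: ennreal)"
  using sum_le_suminf[of f "{k}"] by (simp add: summableI)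

lemma ennreal_le_add_abs_diff: "ennreal a \<le> ennreal b + ennreal \<bar>a - b\<bar>"
proof -
  have "ennreal a \<le> ennreal (max b 0 + \<bar>a - b\<bar>)" by (intro ennreal_leI) linarith
  also have "\<dots> = ennreal b + ennreal \<bar>a - b\<bar>" by (simp add: ennreal_plus ennreal_neg max_def)
  finally show ?thesis .
qed

lemma enn2real_abs_diff_le:
  fixes P Q R :: ennreal
  assumes "P \<le> Q + R" "Q \<le> P + R" "P < \<infinity>" "R < \<infinity>"
  shows "\<bar>enn2real P - enn2real Q\<bar> \<le> enn2real R"
proof -
  have "Q < \<infinity>" using assms by (simp add: le_less_trans)
  then obtain p q r where "P = ennreal p" "Q = ennreal q" "R = ennreal r" "0 \<le> p" "0 \<le> q" "0 \<le> r"
    using assms(3,4) by (metis ennreal_cases less_irrefl ennreal_less_top infinity_ennreal_def)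
  with assms(1,2) show ?thesis by (simp add: ennreal_plus[symmetric] del: ennreal_plus)
qed

lemma nn_integral_indicator_le_add:
  assumes "A \<in> sets M" "v \<in> borel_measurable M" "w \<in> borel_measurable M"
    and "\<And>x. x \<in> A \<Longrightarrow> u x \<le> v x + w x"
  shows "(\<integral>\<^sup>+x. indicator A x * u x \<partial>M)
    \<le> (\<integral>\<^sup>+x. indicator A x * v x \<partial>M) + (\<integral>\<^sup>+x. indicator A x * w x \<partial>M)"
proof -
  note [measurable] = assms(1-3)
  have "(\<integral>\<^sup>+x. indicator A x * u x \<partial>M) \<le> (\<integral>\<^sup>+x. indicator A x * v x + indicator A x * w x \<partial>M)"
    using assms(4) by (intro nn_integral_mono) (auto simp: indicator_def)
  also have "\<dots> = (\<integral>\<^sup>+x. indicator A x * v x \<partial>M) + (\<integral>\<^sup>+x. indicator A x * w x \<partial>M)"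
    by (intro nn_integral_add) measurable
  finally show ?thesis .
qed

lemma enn2real_nn_integral_indicator_diff_le:
  fixes f g :: "'a \<Rightarrow> 'b \<Rightarrow> real"
  assumes "sigma_finite_measure N" "G \<in> sets M" "H \<in> sets N"
    and "case_prod f \<in> borel_measurable (M \<Otimes>\<^sub>M N)" "case_prod g \<in> borel_measurable (M \<Otimes>\<^sub>M N)"
    and "(\<integral>\<^sup>+x. indicator G x * (\<integral>\<^sup>+y. indicator H y * ennreal (f x y) \<partial>N) \<partial>M) < \<infinity>"
    and "(\<integral>\<^sup>+x. indicator G x * (\<integral>\<^sup>+y. indicator H y * ennreal \<bar>f x y - g x y\<bar> \<partial>N) \<partial>M) < \<infinity>"
  shows "\<bar>enn2real (\<integral>\<^sup>+x. indicator G x * (\<integral>\<^sup>+y. indicator H y * ennreal (f x y) \<partial>N) \<partial>M)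
      - enn2real (\<integral>\<^sup>+x. indicator G x * (\<integral>\<^sup>+y. indicator H y * ennreal (g x y) \<partial>N) \<partial>M)\<bar>
    \<le> enn2real (\<integral>\<^sup>+x. indicator G x * (\<integral>\<^sup>+y. indicator H y * ennreal \<bar>f x y - g x y\<bar> \<partial>N) \<partial>M)"
proof -
  interpret N: sigma_finite_measure N by (fact assms(1))
  note [measurable] = assms(2-5)
  have triangle: "(\<integral>\<^sup>+x. indicator G x * (\<integral>\<^sup>+y. indicator H y * ennreal (a x y) \<partial>N) \<partial>M)
    \<le> (\<integral>\<^sup>+x. indicator G x * (\<integral>\<^sup>+y. indicator H y * ennreal (b x y) \<partial>N) \<partial>M)
      + (\<integral>\<^sup>+x. indicator G x * (\<integral>\<^sup>+y. indicator H y * ennreal \<bar>a x y - b x y\<bar> \<partial>N) \<partial>M)"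
    if [measurable]: "case_prod a \<in> borel_measurable (M \<Otimes>\<^sub>M N)" "case_prod b \<in> borel_measurable (M \<Otimes>\<^sub>M N)"
    for a b :: "'a \<Rightarrow> 'b \<Rightarrow> real"
  proof (rule nn_integral_indicator_le_add)
    fix x
    assume "x \<in> G"
    then have [measurable]: "x \<in> space M" using assms(2) sets.sets_into_space by blast
    show "(\<integral>\<^sup>+y. indicator H y * ennreal (a x y) \<partial>N)
      \<le> (\<integral>\<^sup>+y. indicator H y * ennreal (b x y) \<partial>N) + (\<integral>\<^sup>+y. indicator H y * ennreal \<bar>a x y - b x y\<bar> \<partial>N)"
      by (rule nn_integral_indicator_le_add) (measurable, rule ennreal_le_add_abs_diff)
  qed measurable
  show ?thesis
  proof (rule enn2real_abs_diff_le)
    show "(\<integral>\<^sup>+x. indicator G x * (\<integral>\<^sup>+y. indicator H y * ennreal (g x y) \<partial>N) \<partial>M)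
      \<le> (\<integral>\<^sup>+x. indicator G x * (\<integral>\<^sup>+y. indicator H y * ennreal (f x y) \<partial>N) \<partial>M)
        + (\<integral>\<^sup>+x. indicator G x * (\<integral>\<^sup>+y. indicator H y * ennreal \<bar>f x y - g x y\<bar> \<partial>N) \<partial>M)"
      using triangle[of g f] by (simp add: abs_minus_commute)
  qed (use triangle[of f g] assms(6,7) in auto)
qed

lemma nn_integral_indicator_eq_set_integral:
  fixes f :: "'a \<Rightarrow> real"
  assumes "A \<in> sets M" "emeasure M A < \<infinity>" "f \<in> borel_measurable M" "\<And>x. 0 \<le> f x" "\<And>x. f x \<le> B"
  shows "(\<integral>\<^sup>+x. indicator A x * ennreal (f x) \<partial>M) = ennreal (LINT x:A|M. f x)"
proof -
  have "integrable M (\<lambda>x. indicator A x *\<^sub>R f x)"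
    using assms by (intro integrableI_bounded_set_indicator[where B = B]) auto
  then have "(\<integral>\<^sup>+x. ennreal (indicator A x *\<^sub>R f x) \<partial>M) = ennreal (LINT x:A|M. f x)"
    unfolding set_lebesgue_integral_def using assms(4) by (intro nn_integral_eq_integral) auto
  moreover have "(\<integral>\<^sup>+x. indicator A x * ennreal (f x) \<partial>M) = (\<integral>\<^sup>+x. ennreal (indicator A x *\<^sub>R f x) \<partial>M)"
    by (intro nn_integral_cong) (simp add: indicator_def)
  ultimately show ?thesis by simp
qed

(* The factor beta + 1 rather than beta is needed for a = 0, where 0 powr -beta = 0. *)
lemma powr_neg_diff_le:
  fixes a b \<beta> :: real
  assumes "0 \<le> a" "0 \<le> b" "0 < \<beta>"
  shows "\<bar>a powr -\<beta> - b powr -\<beta>\<bar> \<le> (\<beta> + 1) * \<bar>a - b\<bar> * (a powr (-\<beta> - 1) + b powr (-\<beta> - 1))"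
proof -
  have ordered: "\<bar>a powr -\<beta> - b powr -\<beta>\<bar> \<le> (\<beta> + 1) * (b - a) * (a powr (-\<beta> - 1) + b powr (-\<beta> - 1))"
    if "0 \<le> a" "a < b" for a b
  proof (cases "a = 0")
    case True
    have "b powr -\<beta> = b * b powr (-\<beta> - 1)"
      using \<open>a < b\<close> True by (simp add: powr_mult_base)
    then show ?thesis
      using True \<open>a < b\<close> assms(3) by (simp add: algebra_simps)
  next
    case False
    have deriv: "DERIV (\<lambda>t. t powr -\<beta>) t :> -\<beta> * t powr (-\<beta> - 1)" if "a \<le> t" for t
      using that \<open>0 \<le> a\<close> False by (intro has_real_derivative_powr) auto
    obtain z where z: "a < z" "b powr -\<beta> - a powr -\<beta> = (b - a) * (-\<beta> * z powr (-\<beta> - 1))"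
      using MVT2[OF \<open>a < b\<close> deriv] by auto
    have "z powr (-\<beta> - 1) \<le> a powr (-\<beta> - 1)"
      using z(1) \<open>0 \<le> a\<close> False assms(3) by (intro powr_mono2') auto
    have "a powr -\<beta> - b powr -\<beta> = \<beta> * (b - a) * z powr (-\<beta> - 1)"
      using z(2) by (simp add: algebra_simps)
    then have "\<bar>a powr -\<beta> - b powr -\<beta>\<bar> \<le> \<beta> * (b - a) * a powr (-\<beta> - 1)"
      using \<open>z powr (-\<beta> - 1) \<le> a powr (-\<beta> - 1)\<close> \<open>a < b\<close> assms(3) by (simp add: mult_left_mono)
    also have "\<dots> \<le> (\<beta> + 1) * (b - a) * (a powr (-\<beta> - 1) + b powr (-\<beta> - 1))"
      using \<open>a < b\<close> assms(3) by (intro mult_mono) auto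
    finally show ?thesis .
  qed
  consider "a < b" | "a = b" | "b < a" by linarith
  then show ?thesis
    using ordered[of a b] ordered[of b a] assms by cases (auto simp: abs_minus_commute add.commute)
qed

lemma dyadic_kernel_times_radius_power:
  fixes r \<gamma> :: real and N k :: nat
  assumes "0 < r"
  shows "(r / 2 ^ Suc k) powr -\<gamma> * (r / 2 ^ k) ^ N = 2 powr \<gamma> * r powr (N - \<gamma>) * (2 powr (\<gamma> - N)) ^ k"
proof -
  define s where "s = r / 2 ^ k"
  have s: "0 < s" using assms by (simp add: s_def)
  have "(r / 2 ^ Suc k) powr -\<gamma> * (r / 2 ^ k) ^ N = (s / 2) powr -\<gamma> * s powr N"
    using s by (simp add: s_def powr_realpow mult.commute)
  also have "\<dots> = 2 powr \<gamma> * s powr (N - \<gamma>)"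
    using s by (simp add: powr_divide powr_minus_divide powr_diff)
  also have "s powr (N - \<gamma>) = r powr (N - \<gamma>) * (2 powr (\<gamma> - N)) ^ k"
    using assms by (simp add: s_def powr_divide powr_realpow[symmetric] powr_powr powr_minus_divide powr_diff field_simps)
  finally show ?thesis by simp
qed

lemma dyadic_shellE:
  fixes d r :: real
  assumes "0 < d" "d < r"
  obtains k where "r / 2 ^ Suc k \<le> d" "d < r / 2 ^ k"
proof -
  obtain n where "r / d < 2 ^ n" using real_arch_pow[of 2 "r / d"] by auto
  then have "r / 2 ^ n \<le> d" using assms(1) by (simp add: field_simps)
  then obtain k where "\<not> r / 2 ^ k \<le> d" "r / 2 ^ Suc k \<le> d"
    using exists_least_lemma[of "\<lambda>k. r / 2 ^ k \<le> d"] assms(2) by auto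
  then show ?thesis using that by auto
qed

section \<open>Riesz potentials of sets of finite measure\<close>

(* The 1 bounds the part of G outside the ball around w of volume |G|; the other term is the
   geometric series over the dyadic balls inside it. *)
definition riesz_const :: "nat \<Rightarrow> real \<Rightarrow> real" where
  "riesz_const N \<gamma> = 1 + unit_ball_vol N * 2 powr \<gamma> / (1 - 2 powr (\<gamma> - N))"

lemma riesz_const_ge_1:
  assumes "\<gamma> < real N"
  shows "1 \<le> riesz_const N \<gamma>"
proof -
  have "2 powr (\<gamma> - N) < 1" using assms by (intro powr_less_one) auto
  then show ?thesis unfolding riesz_const_def by simp
qed

lemma norm_powr_le_dyadic_sum:
  fixes x w :: "'a::real_normed_vector"
  assumes "0 < \<gamma>" "0 < r"
  shows "indicator G x * ennreal (norm (x - w) powr -\<gamma>)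
    \<le> indicator G x * ennreal (r powr -\<gamma>)
      + (\<Sum>k. ennreal ((r / 2 ^ Suc k) powr -\<gamma>) * indicator (ball w (r / 2 ^ k)) x)"
    (is "_ \<le> ?far + ?near")
proof (cases "x \<in> G \<and> x \<noteq> w")
  case True
  define d where "d = norm (x - w)"
  have "0 < d" using True by (simp add: d_def)
  show ?thesis
  proof (cases "r \<le> d")
    case True
    then have "d powr -\<gamma> \<le> r powr -\<gamma>" using assms by (intro powr_mono2') auto
    then have "indicator G x * ennreal (d powr -\<gamma>) \<le> ?far"
      by (intro mult_left_mono ennreal_leI) auto
    then show ?thesis unfolding d_def by (rule add_increasing2[rotated]) simp
  next
    case False
    then have "d < r" by simp
    then obtain k where k: "r / 2 ^ Suc k \<le> d" "d < r / 2 ^ k"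
      by (rule dyadic_shellE[OF \<open>0 < d\<close>])
    have "d powr -\<gamma> \<le> (r / 2 ^ Suc k) powr -\<gamma>" using k assms by (intro powr_mono2') auto
    moreover have "x \<in> ball w (r / 2 ^ k)" using k by (simp add: d_def dist_norm norm_minus_commute)
    ultimately have "indicator G x * ennreal (d powr -\<gamma>)
        \<le> ennreal ((r / 2 ^ Suc k) powr -\<gamma>) * indicator (ball w (r / 2 ^ k)) x"
      using \<open>x \<in> G \<and> x \<noteq> w\<close> by (simp only: indicator_simps mult_1 mult_1_right ennreal_leI)
    also have "\<dots> \<le> ?near"
      by (rule ennreal_le_suminf)
    finally show ?thesis unfolding d_def by (rule add_increasing[rotated]) simp
  qed
next
  case False
  then have "indicator G x * ennreal (norm (x - w) powr -\<gamma>) = 0" by (cases "x \<in> G") simp_all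
  then show ?thesis by (simp only: zero_le)
qed

lemma nn_integral_dyadic_ball_term:
  fixes w :: "'a::euclidean_space" and \<gamma> r :: real
  assumes "0 < r"
  shows "(\<integral>\<^sup>+x. ennreal ((r / 2 ^ Suc k) powr -\<gamma>) * indicator (ball w (r / 2 ^ k)) x \<partial>lborel)
    = ennreal (unit_ball_vol DIM('a) * 2 powr \<gamma> * r powr (DIM('a) - \<gamma>) * (2 powr (\<gamma> - DIM('a))) ^ k)"
proof -
  have "0 \<le> r / 2 ^ k" using assms by simp
  then have "(\<integral>\<^sup>+x. ennreal ((r / 2 ^ Suc k) powr -\<gamma>) * indicator (ball w (r / 2 ^ k)) x \<partial>lborel)
      = ennreal ((r / 2 ^ Suc k) powr -\<gamma>) * ennreal (unit_ball_vol DIM('a) * (r / 2 ^ k) ^ DIM('a))"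
    by (simp add: nn_integral_cmult_indicator emeasure_ball)
  also have "\<dots> = ennreal (unit_ball_vol DIM('a) * ((r / 2 ^ Suc k) powr -\<gamma> * (r / 2 ^ k) ^ DIM('a)))"
    using \<open>0 \<le> r / 2 ^ k\<close> by (simp add: ennreal_mult mult_ac)
  also have "\<dots> = ennreal (unit_ball_vol DIM('a) * 2 powr \<gamma> * r powr (DIM('a) - \<gamma>) * (2 powr (\<gamma> - DIM('a))) ^ k)"
    unfolding dyadic_kernel_times_radius_power[OF assms] by (simp add: mult_ac)
  finally show ?thesis .
qed

lemma nn_integral_norm_powr_le_dyadic:
  fixes w :: "'a::euclidean_space" and \<gamma> r :: real
  assumes "0 < \<gamma>" "\<gamma> < DIM('a)" "G \<in> sets lborel" "0 < r"
  shows "(\<integral>\<^sup>+x. indicator G x * ennreal (norm (x - w) powr -\<gamma>) \<partial>lborel)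
    \<le> ennreal (r powr -\<gamma>) * emeasure lborel G + ennreal ((riesz_const DIM('a) \<gamma> - 1) * r powr (DIM('a) - \<gamma>))"
proof -
  define q where "q = 2 powr (\<gamma> - DIM('a))"
  define c where "c = unit_ball_vol DIM('a) * 2 powr \<gamma> * r powr (DIM('a) - \<gamma>)"
  have q: "0 \<le> q" "q < 1" unfolding q_def using assms(2) by (auto intro: powr_less_one)
  have c: "0 \<le> c" by (simp add: c_def)
  let ?a = "\<lambda>k. (r / 2 ^ Suc k) powr -\<gamma>" and ?B = "\<lambda>k. ball w (r / 2 ^ k)"
  have ball_term_measurable: "(\<lambda>x. ennreal (?a k) * indicator (?B k) x) \<in> borel_measurable lborel" for k
    by (intro borel_measurable_times_ennreal borel_measurable_const borel_measurable_indicator) auto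
  have "(\<integral>\<^sup>+x. indicator G x * ennreal (norm (x - w) powr -\<gamma>) \<partial>lborel)
      \<le> (\<integral>\<^sup>+x. indicator G x * ennreal (r powr -\<gamma>) + (\<Sum>k. ennreal (?a k) * indicator (?B k) x) \<partial>lborel)"
    using assms by (intro nn_integral_mono norm_powr_le_dyadic_sum)
  also have "\<dots> = (\<integral>\<^sup>+x. indicator G x * ennreal (r powr -\<gamma>) \<partial>lborel)
      + (\<integral>\<^sup>+x. (\<Sum>k. ennreal (?a k) * indicator (?B k) x) \<partial>lborel)"
    using assms(3) by (intro nn_integral_add borel_measurable_suminf_order[OF ball_term_measurable]) simp
  also have "(\<integral>\<^sup>+x. indicator G x * ennreal (r powr -\<gamma>) \<partial>lborel) = ennreal (r powr -\<gamma>) * emeasure lborel G"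
    using nn_integral_cmult_indicator[OF assms(3), of "ennreal (r powr -\<gamma>)"] by (simp add: mult.commute)
  also have "(\<integral>\<^sup>+x. (\<Sum>k. ennreal (?a k) * indicator (?B k) x) \<partial>lborel)
      = (\<Sum>k. \<integral>\<^sup>+x. ennreal (?a k) * indicator (?B k) x \<partial>lborel)"
    by (rule nn_integral_suminf[OF ball_term_measurable])
  also have "\<dots> = (\<Sum>k. ennreal (c * q ^ k))"
    unfolding c_def q_def using assms(4) by (intro suminf_cong nn_integral_dyadic_ball_term)
  also have "\<dots> = ennreal (c / (1 - q))"
    using q c by (simp add: suminf_ennreal2 summable_geometric suminf_mult suminf_geometric divide_inverse)
  also have "c / (1 - q) = (riesz_const DIM('a) \<gamma> - 1) * r powr (DIM('a) - \<gamma>)"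
    by (simp add: riesz_const_def c_def q_def)
  finally show ?thesis .
qed

lemma nn_integral_norm_powr_le:
  fixes w :: "'a::euclidean_space" and \<gamma> :: real
  assumes "0 < \<gamma>" "\<gamma> < DIM('a)" "G \<in> sets lborel" "emeasure lborel G < \<infinity>"
  shows "(\<integral>\<^sup>+x. indicator G x * ennreal (norm (x - w) powr -\<gamma>) \<partial>lborel)
    \<le> ennreal (riesz_const DIM('a) \<gamma> * measure lborel G powr ((DIM('a) - \<gamma>) / DIM('a)))"
proof -
  define m where "m = measure lborel G"
  have G: "emeasure lborel G = ennreal m" "0 \<le> m"
    using assms(4) unfolding m_def by (auto intro: emeasure_eq_ennreal_measure)
  show ?thesis
  proof (cases "m = 0")
    case True
    then have "G \<in> null_sets lborel" using G assms(3) by (simp add: null_sets_def)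
    then have "(\<integral>\<^sup>+x. indicator G x * ennreal (norm (x - w) powr -\<gamma>) \<partial>lborel) = 0"
      using nn_integral_null_set[OF \<open>G \<in> null_sets lborel\<close>, of "\<lambda>x. ennreal (norm (x - w) powr -\<gamma>)"]
      by (simp add: mult.commute)
    then show ?thesis by simp
  next
    case False
    define r where "r = m powr (1 / DIM('a))"
    have "0 < r" using False G by (simp add: r_def)
    have "m = r powr DIM('a)" using False G by (simp add: r_def powr_powr)
    then have rm: "r powr -\<gamma> * m = r powr (DIM('a) - \<gamma>)"
      by (simp add: powr_add[symmetric])
    have "(\<integral>\<^sup>+x. indicator G x * ennreal (norm (x - w) powr -\<gamma>) \<partial>lborel)
        \<le> ennreal (r powr -\<gamma>) * ennreal m + ennreal ((riesz_const DIM('a) \<gamma> - 1) * r powr (DIM('a) - \<gamma>))"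
      using nn_integral_norm_powr_le_dyadic[OF assms(1-3) \<open>0 < r\<close>] G by simp
    also have "\<dots> = ennreal (r powr -\<gamma> * m + (riesz_const DIM('a) \<gamma> - 1) * r powr (DIM('a) - \<gamma>))"
      using riesz_const_ge_1[OF assms(2)] G(2) by (simp add: ennreal_mult ennreal_plus)
    also have "r powr -\<gamma> * m + (riesz_const DIM('a) \<gamma> - 1) * r powr (DIM('a) - \<gamma>)
        = riesz_const DIM('a) \<gamma> * r powr (DIM('a) - \<gamma>)"
      unfolding rm by (simp add: algebra_simps)
    also have "r powr (DIM('a) - \<gamma>) = m powr ((DIM('a) - \<gamma>) / DIM('a))"
      using G by (simp add: r_def powr_powr)
    finally show ?thesis by (simp add: m_def)
  qed
qed

section \<open>Displacing the pole of the Riesz kernel\<close>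

lemma nn_integral_norm_powr_pair_le:
  fixes y z :: "'a::euclidean_space" and \<gamma> :: real
  assumes "0 < \<gamma>" "\<gamma> < DIM('a)" "G \<in> sets lborel" "emeasure lborel G < \<infinity>"
  shows "(\<integral>\<^sup>+x. indicator G x * (ennreal (norm (x - y) powr -\<gamma>) + ennreal (norm (x - z) powr -\<gamma>)) \<partial>lborel)
    \<le> ennreal (2 * riesz_const DIM('a) \<gamma> * measure lborel G powr ((DIM('a) - \<gamma>) / DIM('a)))"
proof -
  let ?B = "riesz_const DIM('a) \<gamma> * measure lborel G powr ((DIM('a) - \<gamma>) / DIM('a))"
  have [measurable]: "G \<in> sets borel" using assms(3) by simp
  have "(\<integral>\<^sup>+x. indicator G x * (ennreal (norm (x - y) powr -\<gamma>) + ennreal (norm (x - z) powr -\<gamma>)) \<partial>lborel)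
      = (\<integral>\<^sup>+x. indicator G x * ennreal (norm (x - y) powr -\<gamma>) \<partial>lborel)
        + (\<integral>\<^sup>+x. indicator G x * ennreal (norm (x - z) powr -\<gamma>) \<partial>lborel)"
    unfolding distrib_left by (intro nn_integral_add) measurable
  also have "\<dots> \<le> ennreal ?B + ennreal ?B"
    using assms by (intro add_mono nn_integral_norm_powr_le)
  also have "\<dots> = ennreal (2 * ?B)"
    using riesz_const_ge_1[OF assms(2)] by (simp add: ennreal_plus[symmetric] del: ennreal_plus)
  finally show ?thesis by (simp only: mult.assoc)
qed

definition riesz_modulus :: "nat \<Rightarrow> real \<Rightarrow> real \<Rightarrow> real" where
  "riesz_modulus N \<beta> t = 2 * riesz_const N \<beta> * t powr ((N - \<beta>) / N)
     + (\<beta> + 1) * (2 * riesz_const N (\<beta> + 1) * t powr ((N - (\<beta> + 1)) / N))"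

lemma riesz_modulus_nonneg:
  assumes "0 < \<beta>" "\<beta> + 1 < real N" "0 \<le> t"
  shows "0 \<le> riesz_modulus N \<beta> t"
  unfolding riesz_modulus_def using assms riesz_const_ge_1[of \<beta> N] riesz_const_ge_1[of "\<beta> + 1" N] by simp

lemma riesz_modulus_properties:
  assumes "0 < \<beta>" "\<beta> + 1 < real N"
  shows "continuous_on {0..} (riesz_modulus N \<beta>)" "strict_mono_on {0..} (riesz_modulus N \<beta>)"
    "riesz_modulus N \<beta> ` {0..} \<subseteq> {0..}" "riesz_modulus N \<beta> 0 = 0"
proof -
  have e: "0 < (N - \<beta>) / N" "0 < (N - (\<beta> + 1)) / N" using assms by auto
  have c: "1 \<le> riesz_const N \<beta>" "1 \<le> riesz_const N (\<beta> + 1)"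
    using assms by (auto intro: riesz_const_ge_1)
  have "continuous_on {0..} (\<lambda>t::real. t powr e)" if "0 < e" for e
    using that by (intro continuous_on_powr'[OF continuous_on_id continuous_on_const]) auto
  then show "continuous_on {0..} (riesz_modulus N \<beta>)"
    unfolding riesz_modulus_def[abs_def] using e
    by (intro continuous_on_add continuous_on_mult[OF continuous_on_const]) auto
  show "strict_mono_on {0..} (riesz_modulus N \<beta>)"
  proof (rule strict_mono_onI)
    fix s t :: real
    assume "s \<in> {0..}" "t \<in> {0..}" "s < t"
    then have "s powr e < t powr e" if "0 < e" for e
      using that by (intro powr_less_mono2) auto
    then show "riesz_modulus N \<beta> s < riesz_modulus N \<beta> t"
      unfolding riesz_modulus_def using e c assms(1)
      by (intro add_strict_mono mult_strict_left_mono) auto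
  qed
  show "riesz_modulus N \<beta> ` {0..} \<subseteq> {0..}"
    using riesz_modulus_nonneg[OF assms] by auto
  show "riesz_modulus N \<beta> 0 = 0"
    unfolding riesz_modulus_def by simp
qed

lemma nn_integral_norm_powr_diff_le:
  fixes y z :: "'a::euclidean_space" and \<beta> :: real
  assumes "0 < \<beta>" "\<beta> + 1 < DIM('a)" "G \<in> sets lborel" "emeasure lborel G < \<infinity>"
  shows "(\<integral>\<^sup>+x. indicator G x * ennreal \<bar>norm (y - x) powr -\<beta> - norm (z - x) powr -\<beta>\<bar> \<partial>lborel)
    \<le> ennreal (riesz_modulus DIM('a) \<beta> (measure lborel G) * min 1 (norm (y - z)))"
    (is "?L \<le> _")
proof -
  define A where "A \<gamma> = 2 * riesz_const DIM('a) \<gamma> * measure lborel G powr ((DIM('a) - \<gamma>) / DIM('a))" for \<gamma> :: real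
  have A: "0 \<le> A \<gamma>" if "\<gamma> < DIM('a)" for \<gamma> :: real
    using riesz_const_ge_1[OF that] by (simp add: A_def)
  have bound: "?L \<le> ennreal (c * A \<gamma>)"
    if "0 \<le> c" "0 < \<gamma>" "\<gamma> < DIM('a)"
      and pointwise: "\<And>x. \<bar>norm (y - x) powr -\<beta> - norm (z - x) powr -\<beta>\<bar>
        \<le> c * (norm (x - y) powr -\<gamma> + norm (x - z) powr -\<gamma>)"
    for c \<gamma> :: real
  proof -
    have [measurable]: "G \<in> sets borel" using assms(3) by simp
    have "?L \<le> (\<integral>\<^sup>+x. ennreal c * (indicator G x * (ennreal (norm (x - y) powr -\<gamma>) + ennreal (norm (x - z) powr -\<gamma>))) \<partial>lborel)"
    proof (rule nn_integral_mono)
      fix x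
      have "ennreal \<bar>norm (y - x) powr -\<beta> - norm (z - x) powr -\<beta>\<bar>
          \<le> ennreal (c * (norm (x - y) powr -\<gamma> + norm (x - z) powr -\<gamma>))"
        by (rule ennreal_leI[OF pointwise])
      also have "\<dots> = ennreal c * (ennreal (norm (x - y) powr -\<gamma>) + ennreal (norm (x - z) powr -\<gamma>))"
        using \<open>0 \<le> c\<close> by (simp add: ennreal_mult ennreal_plus)
      finally show "indicator G x * ennreal \<bar>norm (y - x) powr -\<beta> - norm (z - x) powr -\<beta>\<bar>
          \<le> ennreal c * (indicator G x * (ennreal (norm (x - y) powr -\<gamma>) + ennreal (norm (x - z) powr -\<gamma>)))"
        unfolding indicator_def by simp
    qed
    also have "\<dots> = ennreal c * (\<integral>\<^sup>+x. indicator G x * (ennreal (norm (x - y) powr -\<gamma>) + ennreal (norm (x - z) powr -\<gamma>)) \<partial>lborel)"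
      by (rule nn_integral_cmult) measurable
    also have "\<dots> \<le> ennreal c * ennreal (A \<gamma>)"
      unfolding A_def using that(2,3) assms(3,4) by (intro mult_left_mono nn_integral_norm_powr_pair_le) auto
    also have "\<dots> = ennreal (c * A \<gamma>)"
      using ennreal_mult[OF \<open>0 \<le> c\<close> A[OF that(3)]] by simp
    finally show ?thesis .
  qed
  have crude: "?L \<le> ennreal (1 * A \<beta>)"
  proof (rule bound)
    fix x
    show "\<bar>norm (y - x) powr -\<beta> - norm (z - x) powr -\<beta>\<bar> \<le> 1 * (norm (x - y) powr -\<beta> + norm (x - z) powr -\<beta>)"
      by (simp add: norm_minus_commute abs_le_iff)
  qed (use assms in auto)
  have lipschitz: "?L \<le> ennreal ((\<beta> + 1) * norm (y - z) * A (\<beta> + 1))"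
  proof (rule bound)
    fix x
    have "\<bar>norm (y - x) powr -\<beta> - norm (z - x) powr -\<beta>\<bar>
        \<le> (\<beta> + 1) * \<bar>norm (y - x) - norm (z - x)\<bar> * (norm (y - x) powr (-\<beta> - 1) + norm (z - x) powr (-\<beta> - 1))"
      using assms(1) by (intro powr_neg_diff_le) auto
    also have "\<dots> \<le> (\<beta> + 1) * norm (y - z) * (norm (y - x) powr (-\<beta> - 1) + norm (z - x) powr (-\<beta> - 1))"
      using norm_triangle_ineq3[of "y - x" "z - x"] assms(1) by (intro mult_right_mono mult_left_mono) auto
    finally have "\<bar>norm (y - x) powr -\<beta> - norm (z - x) powr -\<beta>\<bar>
        \<le> (\<beta> + 1) * norm (y - z) * (norm (y - x) powr (-\<beta> - 1) + norm (z - x) powr (-\<beta> - 1))" .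
    then show "\<bar>norm (y - x) powr -\<beta> - norm (z - x) powr -\<beta>\<bar>
        \<le> (\<beta> + 1) * norm (y - z) * (norm (x - y) powr -(\<beta> + 1) + norm (x - z) powr -(\<beta> + 1))"
      by (simp add: norm_minus_commute)
  qed (use assms in auto)
  have tau: "riesz_modulus DIM('a) \<beta> (measure lborel G) = A \<beta> + (\<beta> + 1) * A (\<beta> + 1)"
    by (simp add: riesz_modulus_def A_def)
  show ?thesis
  proof (cases "norm (y - z) \<le> 1")
    case True
    have "(\<beta> + 1) * norm (y - z) * A (\<beta> + 1) \<le> (A \<beta> + (\<beta> + 1) * A (\<beta> + 1)) * norm (y - z)"
      using A[of \<beta>] assms(1,2) by (simp add: algebra_simps)
    with True have "ennreal ((\<beta> + 1) * norm (y - z) * A (\<beta> + 1))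
        \<le> ennreal (riesz_modulus DIM('a) \<beta> (measure lborel G) * min 1 (norm (y - z)))"
      unfolding tau by (intro ennreal_leI) simp
    with lipschitz show ?thesis by (rule order_trans)
  next
    case False
    have "1 * A \<beta> \<le> A \<beta> + (\<beta> + 1) * A (\<beta> + 1)"
      using A[of "\<beta> + 1"] assms(1,2) by simp
    with False have "ennreal (1 * A \<beta>)
        \<le> ennreal (riesz_modulus DIM('a) \<beta> (measure lborel G) * min 1 (norm (y - z)))"
      unfolding tau by (intro ennreal_leI) simp
    with crude show ?thesis by (rule order_trans)
  qed
qed

section \<open>Transporting the Riesz kernel\<close>

lemma incseq_truncated_powr:
  fixes t \<beta> :: real
  assumes "0 < \<beta>"
  shows "incseq (\<lambda>n. max t (1 / Suc n) powr -\<beta>)"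
proof (rule incseq_SucI)
  fix n
  have "1 / real (Suc (Suc n)) \<le> 1 / Suc n" by (simp add: frac_le)
  then have "max t (1 / Suc (Suc n)) \<le> max t (1 / Suc n)" by (rule max.mono[OF order_refl])
  then show "max t (1 / Suc n) powr -\<beta> \<le> max t (1 / Suc (Suc n)) powr -\<beta>"
    using assms by (intro powr_mono2') (auto simp: less_max_iff_disj)
qed

lemma SUP_truncated_powr:
  fixes t \<beta> :: real
  assumes "0 < \<beta>" "0 < t"
  shows "(SUP n. ennreal (max t (1 / Suc n) powr -\<beta>)) = ennreal (t powr -\<beta>)"
proof (rule antisym)
  show "(SUP n. ennreal (max t (1 / Suc n) powr -\<beta>)) \<le> ennreal (t powr -\<beta>)"
    using assms by (intro SUP_least ennreal_leI powr_mono2') auto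
  obtain n where "1 / Suc n < t" using assms(2) by (rule nat_approx_posE)
  then have "ennreal (t powr -\<beta>) = ennreal (max t (1 / Suc n) powr -\<beta>)" by simp
  also have "\<dots> \<le> (SUP n. ennreal (max t (1 / Suc n) powr -\<beta>))" by (rule SUP_upper) simp
  finally show "ennreal (t powr -\<beta>) \<le> (SUP n. ennreal (max t (1 / Suc n) powr -\<beta>))" .
qed

(* The AE hypothesis cannot be dropped: 0 powr -beta = 0, while the truncations tend to infinity
   wherever g y = x. *)
lemma nn_integral_norm_powr_eq_SUP_truncated:
  fixes g :: "'b \<Rightarrow> 'a::euclidean_space" and \<beta> :: real
  assumes "0 < \<beta>" "A \<in> sets M" "g \<in> borel_measurable M" "AE y in M. y \<in> A \<longrightarrow> g y \<noteq> x"
  shows "(\<integral>\<^sup>+y. indicator A y * ennreal (norm (g y - x) powr -\<beta>) \<partial>M)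
    = (SUP n. \<integral>\<^sup>+y. indicator A y * ennreal (max (norm (g y - x)) (1 / Suc n) powr -\<beta>) \<partial>M)"
proof -
  note [measurable] = assms(2,3)
  let ?f = "\<lambda>n y. indicator A y * ennreal (max (norm (g y - x)) (1 / Suc n) powr -\<beta>)"
  have "(\<integral>\<^sup>+y. indicator A y * ennreal (norm (g y - x) powr -\<beta>) \<partial>M) = (\<integral>\<^sup>+y. (SUP n. ?f n y) \<partial>M)"
  proof (rule nn_integral_cong_AE)
    show "AE y in M. indicator A y * ennreal (norm (g y - x) powr -\<beta>) = (SUP n. ?f n y)"
      using assms(4)
    proof eventually_elim
      case (elim y)
      show ?case
      proof (cases "y \<in> A")
        case True
        with elim have "0 < norm (g y - x)" by simp
        then show ?thesis
          using SUP_truncated_powr[OF assms(1)] by (simp add: SUP_mult_left_ennreal[symmetric])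
      qed simp
    qed
  qed
  also have "\<dots> = (SUP n. integral\<^sup>N M (?f n))"
  proof (rule nn_integral_monotone_convergence_SUP)
    show "incseq ?f"
      using incseq_truncated_powr[OF assms(1)]
      by (auto simp: incseq_def le_fun_def intro!: mult_left_mono ennreal_leI)
  qed measurable
  finally show ?thesis .
qed

lemma transport_map_nn_integral_norm_powr:
  fixes \<Phi> :: "'a::euclidean_space \<Rightarrow> 'a" and \<beta> :: real
  assumes "transport_map \<Phi> H K" "H \<in> sets borel" "K \<in> sets borel" "0 < \<beta>"
    and "AE y in lborel. y \<in> H \<longrightarrow> \<Phi> y \<noteq> x"
  shows "(\<integral>\<^sup>+z. indicator K z * ennreal (norm (z - x) powr -\<beta>) \<partial>lborel)
    = (\<integral>\<^sup>+y. indicator H y * ennreal (norm (\<Phi> y - x) powr -\<beta>) \<partial>lborel)"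
proof -
  define h where "h n z = max (norm (z - x)) (1 / Suc n) powr -\<beta>" for n z
  have "continuous_on UNIV (h n)" for n
    unfolding h_def by (intro continuous_on_powr' continuous_intros) (auto simp: max_def)
  then have push: "(\<integral>\<^sup>+z. indicator K z * ennreal (h n z) \<partial>lborel) = (\<integral>\<^sup>+y. indicator H y * ennreal (h n (\<Phi> y)) \<partial>lborel)" for n
    using assms(1) unfolding transport_map_def by (simp add: h_def)
  have "\<Phi> \<in> borel_measurable lborel" using assms(1) by (simp add: transport_map_def)
  have "(\<integral>\<^sup>+z. indicator K z * ennreal (norm (z - x) powr -\<beta>) \<partial>lborel)
      = (SUP n. \<integral>\<^sup>+z. indicator K z * ennreal (h n z) \<partial>lborel)"
  proof -
    have "AE z in lborel. z \<in> K \<longrightarrow> z \<noteq> x"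
      using AE_lborel_singleton[of x] by eventually_elim simp
    then show ?thesis
      unfolding h_def using nn_integral_norm_powr_eq_SUP_truncated[of \<beta> K lborel "\<lambda>z. z" x] assms(3,4) by simp
  qed
  also have "\<dots> = (SUP n. \<integral>\<^sup>+y. indicator H y * ennreal (h n (\<Phi> y)) \<partial>lborel)"
    by (simp only: push)
  also have "\<dots> = (\<integral>\<^sup>+y. indicator H y * ennreal (norm (\<Phi> y - x) powr -\<beta>) \<partial>lborel)"
    unfolding h_def using assms(2,4,5) \<open>\<Phi> \<in> borel_measurable lborel\<close>
    by (intro nn_integral_norm_powr_eq_SUP_truncated[symmetric]) auto
  finally show ?thesis .
qed

lemma invertible_transport_map_AE_ne:
  assumes "invertible_transport_map \<Phi> H K"
  shows "AE y in lborel. y \<in> H \<longrightarrow> \<Phi> y \<noteq> x"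
proof -
  obtain \<Psi> where "AE y in lborel. y \<in> H \<longrightarrow> \<Psi> (\<Phi> y) = y"
    using assms unfolding invertible_transport_map_def by blast
  with AE_lborel_singleton[of "\<Psi> x"] show ?thesis by eventually_elim auto
qed

lemma nn_integral_riesz_kernel_finite:
  fixes G H :: "'a::euclidean_space set" and \<beta> :: real
  assumes "0 < \<beta>" "\<beta> < DIM('a)" "G \<in> sets borel" "H \<in> sets borel"
    and "emeasure lborel G < \<infinity>" "emeasure lborel H < \<infinity>"
  shows "(\<integral>\<^sup>+x. indicator G x * (\<integral>\<^sup>+y. indicator H y * ennreal (norm (y - x) powr -\<beta>) \<partial>lborel) \<partial>lborel) < \<infinity>"
proof -
  define C where "C = riesz_const DIM('a) \<beta> * measure lborel H powr ((DIM('a) - \<beta>) / DIM('a))"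
  have "(\<integral>\<^sup>+y. indicator H y * ennreal (norm (y - x) powr -\<beta>) \<partial>lborel) \<le> ennreal C" for x
    unfolding C_def using assms by (intro nn_integral_norm_powr_le) auto
  then have "(\<integral>\<^sup>+x. indicator G x * (\<integral>\<^sup>+y. indicator H y * ennreal (norm (y - x) powr -\<beta>) \<partial>lborel) \<partial>lborel)
      \<le> (\<integral>\<^sup>+x. ennreal C * indicator G x \<partial>lborel)"
    by (intro nn_integral_mono) (simp split: split_indicator)
  also have "\<dots> = ennreal C * emeasure lborel G" using assms(3) by (simp add: nn_integral_cmult_indicator)
  also have "\<dots> < \<infinity>" using assms(5) by (simp add: ennreal_mult_less_top)
  finally show ?thesis .
qed

lemma nn_integral_riesz_kernel_displacement_le:
  fixes G H :: "'a::euclidean_space set" and \<Phi> :: "'a \<Rightarrow> 'a" and \<beta> :: real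
  assumes \<beta>: "0 < \<beta>" "\<beta> + 1 < DIM('a)"
    and G: "G \<in> sets borel" "emeasure lborel G < \<infinity>"
    and H: "H \<in> sets borel" "emeasure lborel H < \<infinity>"
    and [measurable]: "\<Phi> \<in> borel_measurable borel"
  shows "(\<integral>\<^sup>+x. indicator G x * (\<integral>\<^sup>+y. indicator H y
      * ennreal \<bar>norm (y - x) powr -\<beta> - norm (\<Phi> y - x) powr -\<beta>\<bar> \<partial>lborel) \<partial>lborel)
    \<le> ennreal (riesz_modulus DIM('a) \<beta> (measure lborel G) * (LINT y:H|lborel. min 1 (norm (y - \<Phi> y))))"
proof -
  note [measurable] = G(1) H(1)
  define t where "t = riesz_modulus DIM('a) \<beta> (measure lborel G)"
  define L where "L = (LINT y:H|lborel. min 1 (norm (y - \<Phi> y)))"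
  have t: "0 \<le> t" unfolding t_def using riesz_modulus_nonneg[OF \<beta>] by simp
  have L: "0 \<le> L"
    unfolding L_def set_lebesgue_integral_def by (rule Bochner_Integration.integral_nonneg) (simp add: indicator_def)
  let ?D = "\<lambda>x y. indicator G x * (indicator H y * ennreal \<bar>norm (y - x) powr -\<beta> - norm (\<Phi> y - x) powr -\<beta>\<bar>)"
  have "(\<integral>\<^sup>+x. indicator G x * (\<integral>\<^sup>+y. indicator H y
      * ennreal \<bar>norm (y - x) powr -\<beta> - norm (\<Phi> y - x) powr -\<beta>\<bar> \<partial>lborel) \<partial>lborel)
      = (\<integral>\<^sup>+x. \<integral>\<^sup>+y. ?D x y \<partial>lborel \<partial>lborel)"
    by (intro nn_integral_cong nn_integral_cmult[symmetric]) measurable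
  also have "\<dots> = (\<integral>\<^sup>+y. \<integral>\<^sup>+x. ?D x y \<partial>lborel \<partial>lborel)"
    by (rule pair_sigma_finite.Fubini'[symmetric]) (unfold_locales, measurable)
  also have "\<dots> = (\<integral>\<^sup>+y. indicator H y * (\<integral>\<^sup>+x. indicator G x
      * ennreal \<bar>norm (y - x) powr -\<beta> - norm (\<Phi> y - x) powr -\<beta>\<bar> \<partial>lborel) \<partial>lborel)"
    by (simp add: nn_integral_cmult[symmetric] mult_ac)
  also have "\<dots> \<le> (\<integral>\<^sup>+y. indicator H y * ennreal (t * min 1 (norm (y - \<Phi> y))) \<partial>lborel)"
    unfolding t_def using \<beta> G by (intro nn_integral_mono mult_left_mono nn_integral_norm_powr_diff_le) auto
  also have "\<dots> = ennreal t * (\<integral>\<^sup>+y. indicator H y * ennreal (min 1 (norm (y - \<Phi> y))) \<partial>lborel)"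
    using t by (simp add: nn_integral_cmult[symmetric] ennreal_mult mult_ac)
  also have "(\<integral>\<^sup>+y. indicator H y * ennreal (min 1 (norm (y - \<Phi> y))) \<partial>lborel) = ennreal L"
    unfolding L_def using H by (intro nn_integral_indicator_eq_set_integral[where B = 1]) auto
  finally show ?thesis using t L by (simp add: ennreal_mult t_def L_def)
qed

lemma riesz_I_transport_diff_le:
  fixes \<alpha> :: real and G H K :: "'a::euclidean_space set" and \<Phi> :: "'a \<Rightarrow> 'a"
  assumes \<alpha>: "1 < \<alpha>" "\<alpha> < DIM('a)"
    and G: "G \<in> sets borel" "emeasure lborel G < \<infinity>"
    and HK: "H \<in> sets borel" "K \<in> sets borel" "emeasure lborel H < \<infinity>"
    and \<Phi>: "invertible_transport_map \<Phi> H K"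
  shows "\<bar>riesz_I \<alpha> G H - riesz_I \<alpha> G K\<bar>
    \<le> riesz_modulus DIM('a) (DIM('a) - \<alpha>) (measure lborel G) * (LINT y:H|lborel. min 1 (norm (y - \<Phi> y)))"
proof -
  define \<beta> where "\<beta> = DIM('a) - \<alpha>"
  have \<beta>: "0 < \<beta>" "\<beta> + 1 < DIM('a)" using \<alpha> by (auto simp: \<beta>_def)
  have transport: "transport_map \<Phi> H K" using \<Phi> by (simp add: invertible_transport_map_def)
  then have \<Phi>_measurable[measurable]: "\<Phi> \<in> borel_measurable borel" by (simp add: transport_map_def)
  note [measurable] = G(1) HK(1,2)
  let ?I = "\<lambda>f. \<integral>\<^sup>+x. indicator G x * (\<integral>\<^sup>+y. indicator H y * ennreal (f x y) \<partial>lborel) \<partial>lborel"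
  have "riesz_I \<alpha> G H = enn2real (?I (\<lambda>x y. norm (y - x) powr -\<beta>))"
    by (simp add: riesz_I_def \<beta>_def)
  moreover have "riesz_I \<alpha> G K = enn2real (?I (\<lambda>x y. norm (\<Phi> y - x) powr -\<beta>))"
    unfolding riesz_I_def \<beta>_def[symmetric] using transport HK(1,2) \<beta>(1)
    by (simp add: transport_map_nn_integral_norm_powr invertible_transport_map_AE_ne[OF \<Phi>])
  moreover have "\<bar>enn2real (?I (\<lambda>x y. norm (y - x) powr -\<beta>)) - enn2real (?I (\<lambda>x y. norm (\<Phi> y - x) powr -\<beta>))\<bar>
      \<le> enn2real (?I (\<lambda>x y. \<bar>norm (y - x) powr -\<beta> - norm (\<Phi> y - x) powr -\<beta>\<bar>))"
    using \<beta> G HK nn_integral_riesz_kernel_displacement_le[of \<beta> G H \<Phi>]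
    by (intro enn2real_nn_integral_indicator_diff_le nn_integral_riesz_kernel_finite)
      (auto simp: lborel.sigma_finite_measure_axioms intro: le_less_trans)
  moreover have "\<dots> \<le> riesz_modulus DIM('a) \<beta> (measure lborel G) * (LINT y:H|lborel. min 1 (norm (y - \<Phi> y)))"
  proof (rule enn2real_leI)
    have "0 \<le> (LINT y:H|lborel. min 1 (norm (y - \<Phi> y)))"
      unfolding set_lebesgue_integral_def by (rule Bochner_Integration.integral_nonneg) (simp add: indicator_def)
    then show "0 \<le> riesz_modulus DIM('a) \<beta> (measure lborel G) * (LINT y:H|lborel. min 1 (norm (y - \<Phi> y)))"
      using riesz_modulus_nonneg[OF \<beta>] by simp
  qed (use \<beta> G HK \<Phi>_measurable in \<open>intro nn_integral_riesz_kernel_displacement_le\<close>)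
  ultimately show ?thesis by (simp add: \<beta>_def)
qed

theorem lemma2p5:
  fixes \<alpha> :: real
  assumes "DIM('a::euclidean_space) \<ge> 2" and "1 < \<alpha>" and "\<alpha> < real DIM('a)"
  shows "\<exists>\<tau>2 :: real \<Rightarrow> real.
    continuous_on {0..} \<tau>2 \<and> strict_mono_on {0..} \<tau>2 \<and> \<tau>2 ` {0..} \<subseteq> {0..} \<and> \<tau>2 0 = 0 \<and>
    (\<forall>(G::'a set) H K \<Phi>.
       G \<in> sets borel \<longrightarrow> H \<in> sets borel \<longrightarrow> K \<in> sets borel \<longrightarrow>
       emeasure lborel G < \<infinity> \<longrightarrow>
       emeasure lborel H = emeasure lborel K \<longrightarrow> emeasure lborel H < \<infinity> \<longrightarrow>
       invertible_transport_map \<Phi> H K \<longrightarrow>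
       \<bar>riesz_I \<alpha> G H - riesz_I \<alpha> G K\<bar>
         \<le> \<tau>2 (measure lborel G) * (LINT y:H|lborel. min 1 (norm (y - \<Phi> y))))"
proof -
  \<comment> \<open>Two hypotheses are redundant: DIM('a) \<ge> 2 follows from 1 < alpha < DIM('a), and
    |H| = |K| from testing the transport map with the constant function 1.\<close>
  define \<beta> where "\<beta> = real DIM('a) - \<alpha>"
  have \<beta>: "0 < \<beta>" "\<beta> + 1 < DIM('a)" using assms(2,3) by (auto simp: \<beta>_def)
  show ?thesis
  proof (intro exI[of _ "riesz_modulus DIM('a) \<beta>"] conjI allI impI riesz_modulus_properties[OF \<beta>])
    fix G H K :: "'a set" and \<Phi>
    assume "G \<in> sets borel" "H \<in> sets borel" "K \<in> sets borel" "emeasure lborel G < \<infinity>"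
      "emeasure lborel H < \<infinity>" "invertible_transport_map \<Phi> H K"
    then show "\<bar>riesz_I \<alpha> G H - riesz_I \<alpha> G K\<bar>
        \<le> riesz_modulus DIM('a) \<beta> (measure lborel G) * (LINT y:H|lborel. min 1 (norm (y - \<Phi> y)))"
      unfolding \<beta>_def using assms(2,3) by (intro riesz_I_transport_diff_le) auto
  qed
qed

end
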